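(* Let $\Sigma$ be a finite set with at least two elements and $L\subseteq T_\Sigma^\omega$ a tree language accepted by some Büchi tree automaton. Then there is a set $C\subseteq T_\Sigma^\omega\times\mathbb{T}_\infty$, closed in $T_\Sigma^\omega\times\mathbb{T}_\infty$ (for the Cantor topology), accepted by some Büchi tree automaton as a subset of $T_{\Sigma\times2}^\omega$ identified with $T_\Sigma^\omega\times T_2^\omega$, and such that $L=\pi_0[C]$.
   Context: $T_\Sigma^\omega$ is the set of maps $\{l,r\}^*\to\Sigma$ with the Cantor topology (distance $2^{-n}$, $n$ least length of a node where the trees differ). A Büchi tree automaton is $\mathcal{A}=(\Sigma,Q,q_0,Q_f,\Delta)$ with finite $Q$, $q_0\in Q$, $Q_f\subseteq Q$, $\Delta\subseteq Q\times\Sigma\times Q\times Q$; a run on $t$ is $\rho:\{l,r\}^*\to Q$ with $\rho(\lambda)=q_0$ ($\lambda$ the root) and $(\rho(u),t(u),\rho(ul),\rho(ur))\in\Delta$ for all $u$; it is accepting if every path of $\rho$ visits $Q_f$ infinitely often; $L(\mathcal{A})$ is the set of trees with an accepting run. A path is the sequence of labels along an infinite branch from the root. $\mathbb{T}_\infty$ is the set of $t\in T_{\{0,1\}}^\omega$ every path of which has infinitely many $1$'s. $\pi_0$ is the first projection. *)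

theory Defs
  imports Main "HOL-Library.Cardinality"
begin

datatype dir = Ldir | Rdir

type_synonym 'a tree = "dir list \<Rightarrow> 'a"

definition branch_node :: "(nat \<Rightarrow> dir) \<Rightarrow> nat \<Rightarrow> dir list" where
  "branch_node beta n = map beta [0..<n]"

text \<open>Buechi tree automaton over the alphabet given by the type 'a
  (states are drawn from nat; any finite state set can be renamed into nat).\<close>
record 'a bta =
  states :: "nat set"
  init :: nat
  final :: "nat set"
  trans :: "(nat \<times> 'a \<times> nat \<times> nat) set"

definition bta_wf :: "'a bta \<Rightarrow> bool" where
  "bta_wf A \<longleftrightarrow> finite (states A) \<and> init A \<in> states A \<and> final A \<subseteq> states A
     \<and> trans A \<subseteq> states A \<times> UNIV \<times> states A \<times> states A"

definition is_run :: "'a bta \<Rightarrow> 'a tree \<Rightarrow> nat tree \<Rightarrow> bool" where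
  "is_run A t \<rho> \<longleftrightarrow> \<rho> [] = init A \<and>
     (\<forall>u. (\<rho> u, t u, \<rho> (u @ [Ldir]), \<rho> (u @ [Rdir])) \<in> trans A)"

definition accepting_run :: "'a bta \<Rightarrow> nat tree \<Rightarrow> bool" where
  "accepting_run A \<rho> \<longleftrightarrow> (\<forall>beta. \<exists>\<^sub>\<infinity>n. \<rho> (branch_node beta n) \<in> final A)"

definition bta_lang :: "'a bta \<Rightarrow> 'a tree set" where
  "bta_lang A = {t. \<exists>\<rho>. is_run A t \<rho> \<and> accepting_run A \<rho>}"

definition T_inf :: "bool tree set" where
  "T_inf = {t. \<forall>beta. \<exists>\<^sub>\<infinity>n. t (branch_node beta n)}"

definition pair_tree :: "'a tree \<Rightarrow> 'b tree \<Rightarrow> ('a \<times> 'b) tree" where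
  "pair_tree t s = (\<lambda>u. (t u, s u))"

text \<open>Closedness of C inside the subspace S of T_Sigma x T_2 for the product of the
  Cantor topologies: every point of S that is a limit of points of C lies in C.
  (Distance < 2^-n iff the trees agree on all nodes of length at most n.)\<close>
definition agree_upto :: "nat \<Rightarrow> 'a tree \<Rightarrow> 'a tree \<Rightarrow> bool" where
  "agree_upto n x y \<longleftrightarrow> (\<forall>u. length u \<le> n \<longrightarrow> x u = y u)"

definition closed_in_sub :: "('a tree \<times> 'b tree) set \<Rightarrow> ('a tree \<times> 'b tree) set \<Rightarrow> bool" where
  "closed_in_sub S C \<longleftrightarrow> C \<subseteq> S \<and>
     (\<forall>x\<in>S. (\<forall>n. \<exists>y\<in>C. agree_upto n (fst y) (fst x) \<and> agree_upto n (snd y) (snd x)) \<longrightarrow> x \<in> C)"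

end

theory Submission
  imports Defs "HOL-Library.Infinite_Set"
begin

text \<open>Let \<open>C\<close> consist of the pairs \<open>(t, s)\<close> with \<open>s \<in> T_inf\<close> for which some run of \<open>A\<close>
  on \<open>t\<close> is in a final state at every node marked by \<open>s\<close>. An accepting run yields the
  marking by its final states, and conversely infinitely many marks on a path force
  infinitely many final states, so \<open>fst ` C = L\<close>. Membership in \<open>C\<close> (for \<open>s \<in> T_inf\<close>)
  asks for a labelling of the tree by the finitely many states of \<open>A\<close> that satisfies a
  constraint at each node involving only the node and its children; by Koenig's lemma such
  a labelling exists as soon as every finite depth can be satisfied, which makes \<open>C\<close>
  closed. An automaton for \<open>C\<close> runs \<open>A\<close> while remembering whether the parent node is
  marked, and accepts when it sees marked parents infinitely often.\<close>

lemma UNIV_dir: "(UNIV :: dir set) = {Ldir, Rdir}"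
  using dir.exhaust by blast

lemma finite_UNIV_dir: "finite (UNIV :: dir set)"
  by (simp add: UNIV_dir)

lemma finite_nodes_length_le: "finite {u :: dir list. length u \<le> n}"
  using finite_lists_length_le[OF finite_UNIV_dir] by simp

lemma agree_upto_refl: "agree_upto n x x"
  by (simp add: agree_upto_def)

lemma agree_upto_trans: "agree_upto n x y \<Longrightarrow> agree_upto n y z \<Longrightarrow> agree_upto n x z"
  by (simp add: agree_upto_def)

lemma agree_upto_mono: "m \<le> n \<Longrightarrow> agree_upto n x y \<Longrightarrow> agree_upto m x y"
  by (simp add: agree_upto_def)

lemma agree_upto_chain:
  assumes "\<And>k. agree_upto k (g k) (g (Suc k))" and "n \<le> m"
  shows "agree_upto n (g n) (g m)"
  using assms(2)
proof (induction m rule: dec_induct)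
  case base
  show ?case by (rule agree_upto_refl)
next
  case (step m)
  then show ?case
    using agree_upto_mono[OF _ assms(1)[of m]] agree_upto_trans by blast
qed

text \<open>Pigeonhole: restricted to the finitely many nodes of depth at most \<open>n\<close>, the trees
  take only finitely many values.\<close>
lemma frequently_agree_upto:
  fixes f :: "nat \<Rightarrow> 'q tree"
  assumes "finite Q" and "\<And>m u. f m u \<in> Q"
  shows "\<exists>m\<^sub>0. \<exists>\<^sub>\<infinity>m. agree_upto n (f m\<^sub>0) (f m)"
proof -
  define restrict :: "'q tree \<Rightarrow> 'q tree" where
    "restrict x = (\<lambda>u. if length u \<le> n then x u else undefined)" for x
  have "range (restrict \<circ> f) \<subseteq>
      {x. \<forall>u. (u \<in> {u. length u \<le> n} \<longrightarrow> x u \<in> Q) \<and> (u \<notin> {u. length u \<le> n} \<longrightarrow> x u = undefined)}"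
    using assms(2) by (auto simp: restrict_def)
  then have "finite (range (restrict \<circ> f))"
    using finite_set_of_finite_funs[OF finite_nodes_length_le assms(1)] finite_subset by blast
  then obtain m\<^sub>0 where "infinite {m. restrict (f m) = restrict (f m\<^sub>0)}"
    using pigeonhole_infinite[of "UNIV :: nat set" "restrict \<circ> f"] by auto
  moreover have "agree_upto n (f m\<^sub>0) (f m)" if "restrict (f m) = restrict (f m\<^sub>0)" for m
    unfolding agree_upto_def by (metis fun_cong[OF that] restrict_def)
  ultimately show ?thesis
    unfolding INFM_iff_infinite by (metis (mono_tags, lifting) infinite_super mem_Collect_eq subsetI)
qed

locale local_tree_constraint =
  fixes Q :: "'q set" and R :: "dir list \<Rightarrow> 'q tree \<Rightarrow> bool"
  assumes finite_Q: "finite Q"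
    and R_local: "\<And>u x y. agree_upto (Suc (length u)) x y \<Longrightarrow> R u x \<longleftrightarrow> R u y"
begin

definition solves_below :: "nat \<Rightarrow> 'q tree \<Rightarrow> bool" where
  "solves_below m x \<longleftrightarrow> (\<forall>u. x u \<in> Q) \<and> (\<forall>u. length u < m \<longrightarrow> R u x)"

definition extendable :: "nat \<Rightarrow> 'q tree \<Rightarrow> bool" where
  "extendable n x \<longleftrightarrow> (\<forall>m. \<exists>y. solves_below m y \<and> agree_upto n x y)"

lemma solves_below_mono: "m \<le> m' \<Longrightarrow> solves_below m' x \<Longrightarrow> solves_below m x"
  by (auto simp: solves_below_def)

lemma extendable_in_sequence:
  assumes "\<And>m. solves_below m (f m)"
  shows "\<exists>m\<^sub>0. extendable n (f m\<^sub>0)"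
proof -
  obtain m\<^sub>0 where "\<exists>\<^sub>\<infinity>m. agree_upto n (f m\<^sub>0) (f m)"
    using frequently_agree_upto[OF finite_Q] assms by (meson solves_below_def)
  then have "extendable n (f m\<^sub>0)"
    unfolding extendable_def INFM_nat_le using assms solves_below_mono by blast
  then show ?thesis ..
qed

lemma extendable_step:
  assumes "extendable n x"
  shows "\<exists>y. extendable (Suc n) y \<and> agree_upto n x y"
proof -
  from assms obtain f where f: "\<And>m. solves_below m (f m) \<and> agree_upto n x (f m)"
    unfolding extendable_def by metis
  then obtain m\<^sub>0 where "extendable (Suc n) (f m\<^sub>0)"
    using extendable_in_sequence by blast
  with f show ?thesis by blast
qed

text \<open>Koenig's lemma: the restrictions of extendable labellings can be refined one level
  at a time, and the limit of such a refining sequence satisfies every constraint.\<close>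
theorem solution_exists:
  assumes "\<And>m. \<exists>x. solves_below m x"
  shows "\<exists>x. \<forall>u. R u x"
proof -
  have "\<exists>x. extendable 0 x"
    using assms extendable_in_sequence by metis
  then obtain g where g: "\<And>n. extendable n (g n)" "\<And>n. agree_upto n (g n) (g (Suc n))"
    using dependent_nat_choice[of extendable "\<lambda>n x y. agree_upto n x y"] extendable_step by metis
  define x where "x u = g (length u) u" for u
  have x_g: "agree_upto n x (g n)" for n
    using agree_upto_chain[OF g(2)] by (auto simp: agree_upto_def x_def)
  have "R u x" for u
  proof -
    let ?n = "Suc (length u)"
    obtain y where "solves_below ?n y" and "agree_upto ?n (g ?n) y"
      using g(1) unfolding extendable_def by blast
    moreover have "agree_upto ?n x y"
      using agree_upto_trans[OF x_g] \<open>agree_upto ?n (g ?n) y\<close> by blast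
    ultimately show ?thesis
      using R_local by (auto simp: solves_below_def)
  qed
  then show ?thesis by blast
qed

end

lemma branch_node_Suc: "branch_node beta (Suc n) = branch_node beta n @ [beta n]"
  by (simp add: branch_node_def)

lemma INFM_Suc_iff: "(\<exists>\<^sub>\<infinity>n. P (Suc n)) \<longleftrightarrow> (\<exists>\<^sub>\<infinity>n. P n)"
  unfolding frequently_def by (rule arg_cong[of _ _ Not]) (rule MOST_Suc_iff)

lemma is_run_in_states: "bta_wf A \<Longrightarrow> is_run A t \<rho> \<Longrightarrow> \<rho> u \<in> states A"
  unfolding bta_wf_def is_run_def by blast

definition run_markings :: "'a bta \<Rightarrow> ('a tree \<times> bool tree) set" where
  "run_markings A = {(t, s). s \<in> T_inf \<and> (\<exists>\<rho>. is_run A t \<rho> \<and> (\<forall>u. s u \<longrightarrow> \<rho> u \<in> final A))}"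

lemma run_markings_subset: "run_markings A \<subseteq> UNIV \<times> T_inf"
  by (auto simp: run_markings_def)

lemma fst_run_markings: "fst ` run_markings A = bta_lang A"
proof
  show "fst ` run_markings A \<subseteq> bta_lang A"
  proof
    fix t assume "t \<in> fst ` run_markings A"
    then obtain s \<rho> where "s \<in> T_inf" "is_run A t \<rho>" "\<forall>u. s u \<longrightarrow> \<rho> u \<in> final A"
      by (auto simp: run_markings_def)
    then show "t \<in> bta_lang A"
      unfolding bta_lang_def accepting_run_def T_inf_def by (blast intro: INFM_mono)
  qed
next
  show "bta_lang A \<subseteq> fst ` run_markings A"
  proof
    fix t assume "t \<in> bta_lang A"
    then obtain \<rho> where "is_run A t \<rho>" "accepting_run A \<rho>"
      by (auto simp: bta_lang_def)
    then have "(t, \<lambda>u. \<rho> u \<in> final A) \<in> run_markings A"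
      by (auto simp: run_markings_def T_inf_def accepting_run_def)
    then show "t \<in> fst ` run_markings A" by force
  qed
qed

lemma closed_in_sub_run_markings:
  assumes "bta_wf A"
  shows "closed_in_sub (UNIV \<times> T_inf) (run_markings A)"
  unfolding closed_in_sub_def
proof (intro conjI run_markings_subset ballI impI)
  fix x :: "'a tree \<times> bool tree"
  assume "x \<in> UNIV \<times> T_inf"
    and approx: "\<forall>n. \<exists>y\<in>run_markings A. agree_upto n (fst y) (fst x) \<and> agree_upto n (snd y) (snd x)"
  obtain t s where x: "x = (t, s)" and "s \<in> T_inf"
    using \<open>x \<in> UNIV \<times> T_inf\<close> by auto
  define R where "R u \<rho> \<longleftrightarrow> (u = [] \<longrightarrow> \<rho> [] = init A) \<and>
      (\<rho> u, t u, \<rho> (u @ [Ldir]), \<rho> (u @ [Rdir])) \<in> trans A \<and> (s u \<longrightarrow> \<rho> u \<in> final A)"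
    for u and \<rho> :: "nat tree"
  interpret local_tree_constraint "states A" R
  proof
    show "finite (states A)"
      using assms by (simp add: bta_wf_def)
    fix u :: "dir list" and \<rho> \<rho>' :: "nat tree"
    assume "agree_upto (Suc (length u)) \<rho> \<rho>'"
    then show "R u \<rho> \<longleftrightarrow> R u \<rho>'"
      unfolding R_def agree_upto_def by simp
  qed
  have "\<exists>\<rho>. solves_below n \<rho>" for n
  proof -
    obtain t' s' where "(t', s') \<in> run_markings A" "agree_upto n t' t" "agree_upto n s' s"
      using approx x by fastforce
    then obtain \<rho> where "is_run A t' \<rho>" "\<forall>u. s' u \<longrightarrow> \<rho> u \<in> final A"
      and "\<forall>u. length u < n \<longrightarrow> t' u = t u \<and> s' u = s u"
      by (auto simp: run_markings_def agree_upto_def)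
    then have "solves_below n \<rho>"
      using is_run_in_states[OF assms] unfolding solves_below_def R_def is_run_def by metis
    then show ?thesis by blast
  qed
  then obtain \<rho> where "\<forall>u. R u \<rho>"
    using solution_exists by blast
  then show "x \<in> run_markings A"
    using x \<open>s \<in> T_inf\<close> by (auto simp: run_markings_def R_def is_run_def)
qed

lemma pair_tree_fst_snd: "pair_tree (\<lambda>u. fst (x u)) (\<lambda>u. snd (x u)) = x"
  by (simp add: pair_tree_def)

text \<open>State \<open>p\<close> stands for the state \<open>p div 2\<close> of \<open>A\<close> together with the bit \<open>p mod 2\<close>
  recording whether the parent node is marked (the root gets bit 0), so a path visits
  odd states infinitely often iff it carries infinitely many marks.\<close>
definition marking_automaton :: "'a bta \<Rightarrow> ('a \<times> bool) bta" where
  "marking_automaton A =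
    \<lparr>states = {p. p div 2 \<in> states A}, init = 2 * init A,
     final = {p. p div 2 \<in> states A \<and> odd p},
     trans = {(p, (a, b), p\<^sub>l, p\<^sub>r) | p a b p\<^sub>l p\<^sub>r.
        (p div 2, a, p\<^sub>l div 2, p\<^sub>r div 2) \<in> trans A \<and> (b \<longrightarrow> p div 2 \<in> final A)
        \<and> p\<^sub>l mod 2 = of_bool b \<and> p\<^sub>r mod 2 = of_bool b}\<rparr>"

lemma finite_div_2_preimage:
  assumes "finite S"
  shows "finite {p :: nat. p div 2 \<in> S}"
proof (rule finite_subset)
  show "{p. p div 2 \<in> S} \<subseteq> (\<lambda>(q, b). 2 * q + b) ` (S \<times> {0, 1})"
  proof
    fix p :: nat assume "p \<in> {p. p div 2 \<in> S}"
    then have "(p div 2, p mod 2) \<in> S \<times> {0, 1}" by auto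
    then show "p \<in> (\<lambda>(q, b). 2 * q + b) ` (S \<times> {0, 1})"
      by (rule rev_image_eqI) simp
  qed
qed (use assms in simp)

lemma marking_automaton_simps:
  "states (marking_automaton A) = {p. p div 2 \<in> states A}"
  "init (marking_automaton A) = 2 * init A"
  "final (marking_automaton A) = {p. p div 2 \<in> states A \<and> odd p}"
  by (simp_all add: marking_automaton_def)

lemma trans_marking_automaton_iff:
  "(p, (a, b), p\<^sub>l, p\<^sub>r) \<in> trans (marking_automaton A) \<longleftrightarrow>
     (p div 2, a, p\<^sub>l div 2, p\<^sub>r div 2) \<in> trans A \<and> (b \<longrightarrow> p div 2 \<in> final A)
     \<and> p\<^sub>l mod 2 = of_bool b \<and> p\<^sub>r mod 2 = of_bool b"
  by (simp add: marking_automaton_def)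

lemma bta_wf_marking_automaton:
  assumes "bta_wf A"
  shows "bta_wf (marking_automaton A)"
proof -
  let ?S = "states (marking_automaton A)"
  have "x \<in> ?S \<times> UNIV \<times> ?S \<times> ?S" if "x \<in> trans (marking_automaton A)" for x
  proof -
    obtain p a b p\<^sub>l p\<^sub>r where x: "x = (p, (a, b), p\<^sub>l, p\<^sub>r)"
      by (metis prod.exhaust)
    with that have "(p div 2, a, p\<^sub>l div 2, p\<^sub>r div 2) \<in> trans A"
      by (simp add: trans_marking_automaton_iff)
    with assms show ?thesis
      unfolding x bta_wf_def marking_automaton_simps by blast
  qed
  with assms show ?thesis
    unfolding bta_wf_def marking_automaton_simps by (auto simp: finite_div_2_preimage)
qed

lemma is_run_marking_automaton_imp:
  assumes "is_run (marking_automaton A) (pair_tree t s) \<sigma>"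
  shows "is_run A t (\<lambda>u. \<sigma> u div 2)" and "s u \<Longrightarrow> \<sigma> u div 2 \<in> final A"
  using assms
  by (simp_all add: is_run_def pair_tree_def marking_automaton_simps trans_marking_automaton_iff)

lemma is_run_marking_automaton:
  assumes "is_run A t \<rho>" and "\<forall>u. s u \<longrightarrow> \<rho> u \<in> final A"
  shows "is_run (marking_automaton A) (pair_tree t s)
           (\<lambda>u. 2 * \<rho> u + (if u = [] then 0 else of_bool (s (butlast u))))"
  using assms
  by (simp add: is_run_def pair_tree_def marking_automaton_simps trans_marking_automaton_iff)

lemma final_marking_automaton_child_iff:
  assumes "bta_wf A" and "is_run (marking_automaton A) (pair_tree t s) \<sigma>"
  shows "\<sigma> (u @ [d]) \<in> final (marking_automaton A) \<longleftrightarrow> s u"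
proof -
  have "\<sigma> (u @ [d]) \<in> states (marking_automaton A)"
    using is_run_in_states[OF bta_wf_marking_automaton[OF assms(1)] assms(2)] .
  moreover have "\<sigma> (u @ [d]) mod 2 = of_bool (s u)"
    using assms(2) by (cases d) (simp_all add: is_run_def pair_tree_def trans_marking_automaton_iff)
  ultimately show ?thesis
    by (auto simp: marking_automaton_simps odd_iff_mod_2_eq_one)
qed

lemma accepting_run_marking_automaton_iff:
  assumes "bta_wf A" and "is_run (marking_automaton A) (pair_tree t s) \<sigma>"
  shows "accepting_run (marking_automaton A) \<sigma> \<longleftrightarrow> s \<in> T_inf"
proof -
  have "(\<exists>\<^sub>\<infinity>n. \<sigma> (branch_node beta n) \<in> final (marking_automaton A))
      \<longleftrightarrow> (\<exists>\<^sub>\<infinity>n. s (branch_node beta n))" for beta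
    using INFM_Suc_iff[of "\<lambda>n. \<sigma> (branch_node beta n) \<in> final (marking_automaton A)"]
    by (simp add: branch_node_Suc final_marking_automaton_child_iff[OF assms])
  then show ?thesis
    unfolding accepting_run_def T_inf_def by simp
qed

lemma pair_tree_in_bta_lang_marking_automaton_iff:
  assumes "bta_wf A"
  shows "pair_tree t s \<in> bta_lang (marking_automaton A) \<longleftrightarrow> (t, s) \<in> run_markings A"
proof
  assume "pair_tree t s \<in> bta_lang (marking_automaton A)"
  then obtain \<sigma> where "is_run (marking_automaton A) (pair_tree t s) \<sigma>"
    and "accepting_run (marking_automaton A) \<sigma>"
    by (auto simp: bta_lang_def)
  then show "(t, s) \<in> run_markings A"
    using is_run_marking_automaton_imp[of A t s \<sigma>] accepting_run_marking_automaton_iff[OF assms]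
    unfolding run_markings_def by blast
next
  assume "(t, s) \<in> run_markings A"
  then obtain \<rho> where "s \<in> T_inf" "is_run A t \<rho>" "\<forall>u. s u \<longrightarrow> \<rho> u \<in> final A"
    by (auto simp: run_markings_def)
  then show "pair_tree t s \<in> bta_lang (marking_automaton A)"
    using is_run_marking_automaton accepting_run_marking_automaton_iff[OF assms]
    unfolding bta_lang_def by blast
qed

lemma bta_lang_marking_automaton:
  assumes "bta_wf A"
  shows "bta_lang (marking_automaton A) = (\<lambda>(t, s). pair_tree t s) ` run_markings A"
proof
  show "bta_lang (marking_automaton A) \<subseteq> (\<lambda>(t, s). pair_tree t s) ` run_markings A"
  proof
    fix x assume "x \<in> bta_lang (marking_automaton A)"
    then have "((\<lambda>u. fst (x u)), (\<lambda>u. snd (x u))) \<in> run_markings A"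
      using pair_tree_in_bta_lang_marking_automaton_iff[OF assms] pair_tree_fst_snd by metis
    then show "x \<in> (\<lambda>(t, s). pair_tree t s) ` run_markings A"
      by (rule rev_image_eqI) (simp add: pair_tree_fst_snd)
  qed
qed (use pair_tree_in_bta_lang_marking_automaton_iff[OF assms] in auto)

theorem lemma4p2:
  fixes L :: "('a::finite) tree set" and A :: "'a bta"
  assumes "CARD('a) \<ge> 2"
    and "bta_wf A" and "L = bta_lang A"
  shows "\<exists>C :: ('a tree \<times> bool tree) set.
           C \<subseteq> UNIV \<times> T_inf
         \<and> closed_in_sub (UNIV \<times> T_inf) C
         \<and> (\<exists>B :: ('a \<times> bool) bta. bta_wf B \<and> bta_lang B = (\<lambda>(t, s). pair_tree t s) ` C)
         \<and> L = fst ` C"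
proof (intro exI conjI)
  \<comment> \<open>The construction does not use the hypothesis \<open>2 \<le> CARD('a)\<close>.\<close>
  show "run_markings A \<subseteq> UNIV \<times> T_inf"
    by (rule run_markings_subset)
  show "closed_in_sub (UNIV \<times> T_inf) (run_markings A)"
    using assms(2) by (rule closed_in_sub_run_markings)
  show "bta_wf (marking_automaton A)"
    using assms(2) by (rule bta_wf_marking_automaton)
  show "bta_lang (marking_automaton A) = (\<lambda>(t, s). pair_tree t s) ` run_markings A"
    using assms(2) by (rule bta_lang_marking_automaton)
  show "L = fst ` run_markings A"
    using assms(3) by (simp add: fst_run_markings)
qed

end
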